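(* Let $d^{gen}_{GH}$ be any one of $d_{GH},d^{us}_{GH},d^{ls}_{GH},d^{rc}_{GH}$, and let $X,Y$ be nonempty metric spaces. Then: (1) $2d^{gen}_{GH}(\Delta_1,X)=\operatorname{diam}X$; (2) $2d^{gen}_{GH}(X,Y)\le\max\{\operatorname{diam}X,\operatorname{diam}Y\}$; (3) if $\operatorname{diam}X<\infty$ or $\operatorname{diam}Y<\infty$, then $|\operatorname{diam}X-\operatorname{diam}Y|\le 2d^{gen}_{GH}(X,Y)$; (4) if $\operatorname{diam}X<\infty$, then for all $\lambda,\mu\ge0$, $2d^{gen}_{GH}(\lambda X,\mu X)=|\lambda-\mu|\operatorname{diam}X$; (5) for every $\lambda>0$, $d^{gen}_{GH}(\lambda X,\lambda Y)=\lambda\, d^{gen}_{GH}(X,Y)$, and if $X,Y$ are bounded this also holds for $\lambda=0$; (6) if $X$ and $Y$ are discrete metric spaces, then $d^{gen}_{GH}(X,Y)=d_{GH}(X,Y)$; (7) if a sequence of metric spaces $X_n$ satisfies $d^{gen}_{GH}(X_n,X)\to0$, then $d_{GH}(X_n,X)\to0$.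
   Context: For a metric space, $|xy|$ denotes distance, $\operatorname{diam}X=\sup\{|xy|:x,y\in X\}$, $\Delta_1$ is the one-point metric space, $\lambda X$ for $\lambda>0$ is $X$ with all distances multiplied by $\lambda$, and $0X=\Delta_1$ for bounded $X$. A set-valued map $f:X\rightrightarrows Y$ assigns to each $x\in X$ a nonempty $f(x)\subseteq Y$ and is identified with its graph. A correspondence between $X$ and $Y$ is a subset $R\subseteq X\times Y$ whose projections to $X$ and to $Y$ are both surjective, regarded as the set-valued map $x\mapsto R(x)=\{y:(x,y)\in R\}$; $R^{-1}=\{(y,x):(x,y)\in R\}$; $\mathcal R(X,Y)$ is the set of all correspondences. The distortion of a nonempty $\sigma\subseteq X\times Y$ is $\operatorname{dis}\sigma=\sup\{||xx'|-|yy'||:(x,y),(x',y')\in\sigma\}\in[0,\infty]$. A set-valued map $f$ between topological spaces is upper semicontinuous if for every $x$ and every open $U\supseteq f(x)$ there is a neighborhood $V$ of $x$ with $f(x')\subseteq U$ for all $x'\in V$; lower semicontinuous if for every $x$ and every open $U$ with $f(x)\cap U\ne\emptyset$ there is a neighborhood $V$ of $x$ with $f(x')\cap U\neq\emptyset$ for all $x'\in V$; continuous if both. $\mathcal R_{us}(X,Y)$ (resp. $\mathcal R_{ls}(X,Y)$, $\mathcal R_{rc}(X,Y)$) is the set of $R\in\mathcal R(X,Y)$ such that both $R$ and $R^{-1}$ are upper semicontinuous (resp. lower semicontinuous, continuous). Then $d_{GH}(X,Y)=\frac12\inf\{\operatorname{dis}R:R\in\mathcal R(X,Y)\}$, and $d^{us}_{GH},d^{ls}_{GH},d^{rc}_{GH}$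 are defined by the same formula with $\mathcal R$ replaced by $\mathcal R_{us},\mathcal R_{ls},\mathcal R_{rc}$ respectively. *)

theory Defs
  imports "HOL-Analysis.Analysis"
begin

text \<open>A metric space is represented by a carrier set M together with a distance
  function d, subject to the library locale Metric_space M d.
  Its topology is mtopology M d.\<close>

definition diam :: "'a set \<Rightarrow> ('a \<Rightarrow> 'a \<Rightarrow> real) \<Rightarrow> ereal" where
  "diam M d = (SUP x\<in>M. SUP y\<in>M. ereal (d x y))"

definition Delta1_set :: "unit set" where "Delta1_set = {()}"
definition Delta1_dist :: "unit \<Rightarrow> unit \<Rightarrow> real" where "Delta1_dist = (\<lambda>_ _. 0)"

text \<open>Scaled space lambda X: carrier and distance. For lambda = 0 the carrier is collapsed
  to a single point of M (so 0X is a one-point space, i.e. isometric to Delta1).\<close>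
definition scale_set :: "real \<Rightarrow> 'a set \<Rightarrow> 'a set" where
  "scale_set l M = (if l = 0 then {SOME x. x \<in> M} else M)"
definition scale_dist :: "real \<Rightarrow> ('a \<Rightarrow> 'a \<Rightarrow> real) \<Rightarrow> 'a \<Rightarrow> 'a \<Rightarrow> real" where
  "scale_dist l d = (\<lambda>x y. l * d x y)"

definition correspondence :: "'a set \<Rightarrow> 'b set \<Rightarrow> ('a \<times> 'b) set \<Rightarrow> bool" where
  "correspondence M N R \<longleftrightarrow> R \<subseteq> M \<times> N \<and> fst ` R = M \<and> snd ` R = N"

definition dis :: "('a \<Rightarrow> 'a \<Rightarrow> real) \<Rightarrow> ('b \<Rightarrow> 'b \<Rightarrow> real) \<Rightarrow> ('a \<times> 'b) set \<Rightarrow> ereal" where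
  "dis d e \<sigma> = (SUP p\<in>\<sigma>. SUP q\<in>\<sigma>. ereal \<bar>d (fst p) (fst q) - e (snd p) (snd q)\<bar>)"

definition usc :: "'a topology \<Rightarrow> 'b topology \<Rightarrow> ('a \<times> 'b) set \<Rightarrow> bool" where
  "usc S T R \<longleftrightarrow> (\<forall>x\<in>topspace S. \<forall>U. openin T U \<and> R``{x} \<subseteq> U \<longrightarrow>
      (\<exists>V. openin S V \<and> x \<in> V \<and> (\<forall>x'\<in>V. R``{x'} \<subseteq> U)))"

definition lsc :: "'a topology \<Rightarrow> 'b topology \<Rightarrow> ('a \<times> 'b) set \<Rightarrow> bool" where
  "lsc S T R \<longleftrightarrow> (\<forall>x\<in>topspace S. \<forall>U. openin T U \<and> R``{x} \<inter> U \<noteq> {} \<longrightarrow>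
      (\<exists>V. openin S V \<and> x \<in> V \<and> (\<forall>x'\<in>V. R``{x'} \<inter> U \<noteq> {})))"

datatype gh_kind = GH | GH_us | GH_ls | GH_rc

definition corrs :: "gh_kind \<Rightarrow> 'a set \<Rightarrow> ('a \<Rightarrow> 'a \<Rightarrow> real) \<Rightarrow> 'b set \<Rightarrow> ('b \<Rightarrow> 'b \<Rightarrow> real)
    \<Rightarrow> ('a \<times> 'b) set set" where
  "corrs k M d N e = {R. correspondence M N R \<and>
     (let S = Metric_space.mtopology M d; T = Metric_space.mtopology N e in
      (case k of
         GH \<Rightarrow> True
       | GH_us \<Rightarrow> usc S T R \<and> usc T S (converse R)
       | GH_ls \<Rightarrow> lsc S T R \<and> lsc T S (converse R)
       | GH_rc \<Rightarrow> usc S T R \<and> usc T S (converse R) \<and> lsc S T R \<and> lsc T S (converse R)))}"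

definition dGH :: "gh_kind \<Rightarrow> 'a set \<Rightarrow> ('a \<Rightarrow> 'a \<Rightarrow> real) \<Rightarrow> 'b set \<Rightarrow> ('b \<Rightarrow> 'b \<Rightarrow> real) \<Rightarrow> ereal" where
  "dGH k M d N e = (1/2) * (INF R\<in>corrs k M d N e. dis d e R)"

definition discrete_mspace :: "'a set \<Rightarrow> ('a \<Rightarrow> 'a \<Rightarrow> real) \<Rightarrow> bool" where
  "discrete_mspace M d \<longleftrightarrow> Metric_space.mtopology M d = discrete_topology M"

end

theory Submission
  imports Defs
begin

text \<open>Each variant is half the infimum of the distortion over a subclass of all
  correspondences. Hence lower bounds valid for every correspondence, such as
  \<open>\<bar>diam X - diam Y\<bar> \<le> dis R\<close>, hold for all variants, and \<open>d\<^sub>G\<^sub>H\<close> is the smallest one.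
  The upper bounds come from correspondences that are continuous in both directions: the full
  product \<open>X \<times> Y\<close> and, for \<open>\<lambda>X, \<mu>X\<close> with \<open>\<lambda>, \<mu> > 0\<close>, the identity, because multiplying
  a metric by \<open>\<lambda> > 0\<close> does not change its topology. For the same reason rescaling both spaces
  by \<open>\<lambda> > 0\<close> keeps the admissible correspondences while multiplying every distortion by \<open>\<lambda>\<close>.
  Between discrete spaces every correspondence is continuous.\<close>

lemma INF_ereal_cmult:
  assumes "0 < c"
  shows "(INF i\<in>I. ereal c * f i) = ereal c * (INF i\<in>I. f i)"
  using ereal_Inf_cmult[OF assms, of "\<lambda>x. x \<in> f ` I"] by (simp add: image_image setcompr_eq_image)

lemma dis_upper:
  "p \<in> R \<Longrightarrow> q \<in> R \<Longrightarrow> ereal \<bar>d (fst p) (fst q) - e (snd p) (snd q)\<bar> \<le> dis d e R"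
  unfolding dis_def by (intro SUP_upper2[of p] SUP_upper2[of q]) auto

lemma dis_least:
  "(\<And>p q. p \<in> R \<Longrightarrow> q \<in> R \<Longrightarrow> ereal \<bar>d (fst p) (fst q) - e (snd p) (snd q)\<bar> \<le> B)
    \<Longrightarrow> dis d e R \<le> B"
  unfolding dis_def by (intro SUP_least) auto

lemma dis_nonneg: "R \<noteq> {} \<Longrightarrow> 0 \<le> dis d e R"
  using dis_upper[of _ R _ d e] by (meson abs_ge_zero ereal_less_eq(5) ex_in_conv order_trans)

lemma dis_converse_le: "dis e d (converse R) \<le> dis d e R"
proof (rule dis_least)
  fix p q assume "p \<in> converse R" "q \<in> converse R"
  then have "(snd p, fst p) \<in> R" "(snd q, fst q) \<in> R"
    by auto
  from dis_upper[OF this, of d e]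
  show "ereal \<bar>e (fst p) (fst q) - d (snd p) (snd q)\<bar> \<le> dis d e R"
    by (simp add: abs_minus_commute)
qed

lemma dis_converse: "dis e d (converse R) = dis d e R"
  using dis_converse_le[of e d R] dis_converse_le[of d e "converse R"] by simp

lemma diam_upper: "x \<in> M \<Longrightarrow> y \<in> M \<Longrightarrow> ereal (d x y) \<le> diam M d"
  unfolding diam_def by (intro SUP_upper2[of x] SUP_upper2[of y]) auto

lemma diam_least: "(\<And>x y. x \<in> M \<Longrightarrow> y \<in> M \<Longrightarrow> ereal (d x y) \<le> B) \<Longrightarrow> diam M d \<le> B"
  unfolding diam_def by (intro SUP_least) auto

lemma diam_nonneg: "Metric_space M d \<Longrightarrow> M \<noteq> {} \<Longrightarrow> 0 \<le> diam M d"
  by (metis all_not_in_conv diam_upper Metric_space.nonneg ereal_less_eq(5) order_trans)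

lemma correspondence_converse: "correspondence M N R \<Longrightarrow> correspondence N M (converse R)"
  unfolding correspondence_def by (auto simp: image_iff) force+

lemma correspondence_Id_on: "correspondence M M (Id_on M)"
  unfolding correspondence_def by (auto simp: image_iff) force+

lemma correspondence_nonempty: "correspondence M N R \<Longrightarrow> M \<noteq> {} \<Longrightarrow> R \<noteq> {}"
  unfolding correspondence_def by auto

lemma corrs_subset_corrs_GH: "corrs k M d N e \<subseteq> corrs GH M d N e"
  unfolding corrs_def by auto

lemma correspondence_if_in_corrs: "R \<in> corrs k M d N e \<Longrightarrow> correspondence M N R"
  unfolding corrs_def by auto

lemma usc_times: "topspace S = M \<Longrightarrow> usc S T (M \<times> N)"
  unfolding usc_def by (intro ballI allI impI exI[of _ "topspace S"]) auto

lemma lsc_times: "topspace S = M \<Longrightarrow> lsc S T (M \<times> N)"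
  unfolding lsc_def by (intro ballI allI impI exI[of _ "topspace S"]) auto

lemma usc_Id_on: "topspace T = M \<Longrightarrow> usc T T (Id_on M)"
  unfolding usc_def by (intro ballI allI impI, rename_tac U, rule_tac x=U in exI)
    (auto dest: openin_subset)

lemma lsc_Id_on: "topspace T = M \<Longrightarrow> lsc T T (Id_on M)"
  unfolding lsc_def by (intro ballI allI impI, rename_tac U, rule_tac x=U in exI)
    (auto dest: openin_subset)

lemma usc_discrete_topology: "usc (discrete_topology M) T R"
  unfolding usc_def by (auto intro!: exI[of _ "{_}"])

lemma lsc_discrete_topology: "lsc (discrete_topology M) T R"
  unfolding lsc_def by (auto intro!: exI[of _ "{_}"])

lemma times_in_corrs:
  assumes "Metric_space M d" "Metric_space N e" "M \<noteq> {}" "N \<noteq> {}"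
  shows "M \<times> N \<in> corrs k M d N e"
proof -
  have "correspondence M N (M \<times> N)"
    using assms(3,4) unfolding correspondence_def by auto
  moreover have "converse (M \<times> N) = N \<times> M"
    by auto
  ultimately show ?thesis
    using Metric_space.topspace_mtopology[OF assms(1)] Metric_space.topspace_mtopology[OF assms(2)]
    unfolding corrs_def by (cases k) (auto simp: Let_def usc_times lsc_times)
qed

lemma Id_on_in_corrs:
  assumes "Metric_space M d" "Metric_space.mtopology M d' = Metric_space.mtopology M d"
  shows "Id_on M \<in> corrs k M d M d'"
  using correspondence_Id_on Metric_space.topspace_mtopology[OF assms(1)]
  unfolding corrs_def assms(2) by (cases k) (auto simp: Let_def usc_Id_on lsc_Id_on)

lemma corrs_discrete:
  assumes "discrete_mspace M d" "discrete_mspace N e"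
  shows "corrs k M d N e = corrs GH M d N e"
  using assms unfolding corrs_def discrete_mspace_def
  by (cases k) (simp_all add: Let_def usc_discrete_topology lsc_discrete_topology)

lemma two_dGH_eq_INF: "2 * dGH k M d N e = (INF R\<in>corrs k M d N e. dis d e R)"
  unfolding dGH_def by (cases "INF R\<in>corrs k M d N e. dis d e R") (simp_all add: one_ereal_def)

lemma dGH_nonneg:
  assumes "M \<noteq> {}"
  shows "0 \<le> dGH k M d N e"
proof -
  have "0 \<le> 2 * dGH k M d N e"
    unfolding two_dGH_eq_INF using assms
    by (intro INF_greatest dis_nonneg correspondence_nonempty correspondence_if_in_corrs)
  then show ?thesis
    by (cases "dGH k M d N e") auto
qed

lemma dGH_GH_le: "dGH GH M d N e \<le> dGH k M d N e"
  unfolding dGH_def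
  by (rule ereal_mult_left_mono[OF INF_superset_mono[OF corrs_subset_corrs_GH]]) auto

lemma dGH_discrete:
  assumes "discrete_mspace M d" "discrete_mspace N e"
  shows "dGH k M d N e = dGH GH M d N e"
  unfolding dGH_def by (simp only: corrs_discrete[OF assms, of k])

lemma dis_times_le_max_diam:
  assumes "Metric_space M d" "Metric_space N e"
  shows "dis d e (M \<times> N) \<le> max (diam M d) (diam N e)"
proof (rule dis_least)
  fix p q assume pq: "p \<in> M \<times> N" "q \<in> M \<times> N"
  have "\<bar>d (fst p) (fst q) - e (snd p) (snd q)\<bar> \<le> max (d (fst p) (fst q)) (e (snd p) (snd q))"
    using Metric_space.nonneg[OF assms(1), of "fst p" "fst q"]
      Metric_space.nonneg[OF assms(2), of "snd p" "snd q"] by linarith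
  then have "ereal \<bar>d (fst p) (fst q) - e (snd p) (snd q)\<bar>
      \<le> max (ereal (d (fst p) (fst q))) (ereal (e (snd p) (snd q)))"
    by (cases "d (fst p) (fst q) \<le> e (snd p) (snd q)") (auto simp: max_def)
  also have "\<dots> \<le> max (diam M d) (diam N e)"
    using pq by (intro max.mono diam_upper) auto
  finally show "ereal \<bar>d (fst p) (fst q) - e (snd p) (snd q)\<bar> \<le> max (diam M d) (diam N e)" .
qed

lemma two_dGH_le_max_diam:
  assumes "Metric_space M d" "Metric_space N e" "M \<noteq> {}" "N \<noteq> {}"
  shows "2 * dGH k M d N e \<le> max (diam M d) (diam N e)"
  unfolding two_dGH_eq_INF
  using times_in_corrs[OF assms] dis_times_le_max_diam[OF assms(1,2)] by (rule INF_lower2)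

lemma diam_le_dis_add_diam:
  assumes "correspondence M N R"
  shows "diam N e \<le> dis d e R + diam M d"
proof (rule diam_least)
  fix y y' assume "y \<in> N" "y' \<in> N"
  then obtain x x' where R: "(x, y) \<in> R" "(x', y') \<in> R"
    using assms unfolding correspondence_def by force
  then have "x \<in> M" "x' \<in> M"
    using assms unfolding correspondence_def by auto
  have "ereal (e y y') \<le> ereal \<bar>d x x' - e y y'\<bar> + ereal (d x x')"
    by simp
  also have "\<dots> \<le> dis d e R + diam M d"
    using dis_upper[OF R, of d e] diam_upper[OF \<open>x \<in> M\<close> \<open>x' \<in> M\<close>, of d] by (intro add_mono) auto
  finally show "ereal (e y y') \<le> dis d e R + diam M d" .
qed

lemma abs_diam_diff_le_dis:
  assumes "correspondence M N R" "Metric_space M d" "Metric_space N e" "M \<noteq> {}" "N \<noteq> {}"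
    and "diam M d < \<infinity> \<or> diam N e < \<infinity>"
  shows "\<bar>diam M d - diam N e\<bar> \<le> dis d e R"
proof -
  have "diam M d \<le> dis d e R + diam N e"
    using diam_le_dis_add_diam[OF correspondence_converse[OF assms(1)]] by (simp add: dis_converse)
  moreover have "diam N e \<le> dis d e R + diam M d"
    using diam_le_dis_add_diam[OF assms(1)] .
  ultimately show ?thesis
    using diam_nonneg[OF assms(2,4)] diam_nonneg[OF assms(3,5)] assms(6)
    by (cases "diam M d"; cases "diam N e"; cases "dis d e R") auto
qed

lemma abs_diam_diff_le_two_dGH:
  assumes "Metric_space M d" "Metric_space N e" "M \<noteq> {}" "N \<noteq> {}"
    and "diam M d < \<infinity> \<or> diam N e < \<infinity>"
  shows "\<bar>diam M d - diam N e\<bar> \<le> 2 * dGH k M d N e"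
  unfolding two_dGH_eq_INF
  by (intro INF_greatest abs_diam_diff_le_dis[OF _ assms] correspondence_if_in_corrs)

lemma two_dGH_singleton:
  assumes "Metric_space {p} d" "Metric_space N e" "N \<noteq> {}"
  shows "2 * dGH k {p} d N e = diam N e"
proof -
  have "R = {p} \<times> N" if "R \<in> corrs k {p} d N e" for R
    using that unfolding corrs_def correspondence_def by force
  then have "corrs k {p} d N e = {{p} \<times> N}"
    using times_in_corrs[OF assms(1,2) _ assms(3)] by blast
  moreover have "dis d e ({p} \<times> N) = diam N e"
  proof (rule antisym)
    have "d p p = 0"
      using Metric_space.zero[OF assms(1)] by simp
    then show "dis d e ({p} \<times> N) \<le> diam N e"
      by (intro dis_least) (auto simp: Metric_space.nonneg[OF assms(2)] intro!: diam_upper)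
    show "diam N e \<le> dis d e ({p} \<times> N)"
    proof (rule diam_least)
      fix y y' assume "y \<in> N" "y' \<in> N"
      then show "ereal (e y y') \<le> dis d e ({p} \<times> N)"
        using dis_upper[of "(p, y)" "{p} \<times> N" "(p, y')" d e] \<open>d p p = 0\<close> Metric_space.nonneg[OF assms(2)]
        by simp
    qed
  qed
  ultimately show ?thesis
    unfolding two_dGH_eq_INF by simp
qed

lemma Metric_space_scale_dist: "Metric_space M d \<Longrightarrow> 0 < l \<Longrightarrow> Metric_space M (scale_dist l d)"
  unfolding scale_dist_def Metric_space_def
  by (auto simp: mult.commute distrib_left[symmetric] intro: mult_left_mono)

lemma Metric_space_scale:
  assumes "Metric_space M d" "0 \<le> l"
  shows "Metric_space (scale_set l M) (scale_dist l d)"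
  using assms Metric_space_scale_dist[OF assms(1)]
  by (cases "l = 0") (simp_all add: scale_set_def scale_dist_def Metric_space_def)

lemma scale_set_nonempty: "M \<noteq> {} \<Longrightarrow> scale_set l M \<noteq> {}"
  by (simp add: scale_set_def)

lemma mtopology_scale_dist:
  assumes "Metric_space M d" "0 < l"
  shows "Metric_space.mtopology M (scale_dist l d) = Metric_space.mtopology M d"
proof -
  interpret A: Metric_space M d by (rule assms(1))
  interpret B: Metric_space M "scale_dist l d" by (rule Metric_space_scale_dist[OF assms])
  have "B.mball x r = A.mball x (r / l)" for x r
    using assms(2) unfolding set_eq_iff A.in_mball B.in_mball
    by (auto simp: scale_dist_def field_simps)
  moreover have "A.mball x r = B.mball x (r * l)" for x r
    using assms(2) unfolding set_eq_iff A.in_mball B.in_mball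
    by (auto simp: scale_dist_def field_simps)
  ultimately show ?thesis
    unfolding topology_eq A.openin_mtopology B.openin_mtopology
    by (metis assms(2) divide_pos_pos mult_pos_pos)
qed

lemma dis_scale_dist:
  assumes "0 \<le> l" "R \<noteq> {}"
  shows "dis (scale_dist l d) (scale_dist l e) R = ereal l * dis d e R"
  unfolding dis_def scale_dist_def Sup_ereal_mult_left'[OF assms(2,1)]
  by (simp add: Sup_ereal_mult_left'[OF assms(2,1)] right_diff_distrib[symmetric] abs_mult assms(1))

lemma diam_scale_dist:
  assumes "0 \<le> l" "M \<noteq> {}"
  shows "diam M (scale_dist l d) = ereal l * diam M d"
  unfolding diam_def scale_dist_def Sup_ereal_mult_left'[OF assms(2,1)]
  by (simp add: Sup_ereal_mult_left'[OF assms(2,1)])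

lemma diam_scale:
  assumes "0 \<le> l" "M \<noteq> {}"
  shows "diam (scale_set l M) (scale_dist l d) = ereal l * diam M d"
proof (cases "l = 0")
  case True
  then show ?thesis
    by (simp add: scale_set_def scale_dist_def diam_def zero_ereal_def[symmetric])
qed (simp add: scale_set_def diam_scale_dist[OF assms])

lemma corrs_scale:
  assumes "Metric_space M d" "Metric_space N e" "0 < l"
  shows "corrs k (scale_set l M) (scale_dist l d) (scale_set l N) (scale_dist l e) = corrs k M d N e"
  using assms by (simp add: corrs_def scale_set_def mtopology_scale_dist)

lemma dis_Id_on_scale_dist_le:
  assumes "Metric_space M d"
  shows "dis (scale_dist l d) (scale_dist m d) (Id_on M) \<le> ereal \<bar>l - m\<bar> * diam M d"
proof (rule dis_least)
  fix p q assume "p \<in> Id_on M" "q \<in> Id_on M"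
  then obtain x y where "p = (x, x)" "q = (y, y)" "x \<in> M" "y \<in> M"
    by auto
  moreover have "ereal \<bar>l - m\<bar> * ereal (d x y) \<le> ereal \<bar>l - m\<bar> * diam M d" if "x \<in> M" "y \<in> M"
    using that by (intro ereal_mult_left_mono diam_upper) auto
  ultimately show "ereal \<bar>scale_dist l d (fst p) (fst q) - scale_dist m d (snd p) (snd q)\<bar>
      \<le> ereal \<bar>l - m\<bar> * diam M d"
    using Metric_space.nonneg[OF assms]
    by (simp add: scale_dist_def left_diff_distrib[symmetric] abs_mult)
qed

text \<open>For \<open>\<lambda> = 0\<close> or \<open>\<mu> = 0\<close> the upper bound is the trivial one \<open>max (diam \<lambda>X) (diam \<mu>X)\<close>;
  otherwise it comes from the identity correspondence.\<close>

lemma two_dGH_scale_scale: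
  assumes "Metric_space M d" "M \<noteq> {}" "diam M d < \<infinity>" "0 \<le> l" "0 \<le> m"
  shows "2 * dGH k (scale_set l M) (scale_dist l d) (scale_set m M) (scale_dist m d)
    = ereal \<bar>l - m\<bar> * diam M d"
proof -
  obtain D where D: "diam M d = ereal D" "0 \<le> D"
    using diam_nonneg[OF assms(1,2)] assms(3) by (cases "diam M d") auto
  have scaled: "Metric_space (scale_set t M) (scale_dist t d)" "scale_set t M \<noteq> {}"
    "diam (scale_set t M) (scale_dist t d) = ereal (t * D)" if "0 \<le> t" for t
    using that assms(1,2) by (simp_all add: Metric_space_scale scale_set_nonempty diam_scale D)
  let ?dGH = "2 * dGH k (scale_set l M) (scale_dist l d) (scale_set m M) (scale_dist m d)"
  have "ereal \<bar>l - m\<bar> * diam M d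
      = \<bar>diam (scale_set l M) (scale_dist l d) - diam (scale_set m M) (scale_dist m d)\<bar>"
    using assms(4,5) by (simp add: scaled D left_diff_distrib[symmetric] abs_mult)
  also have "\<dots> \<le> ?dGH"
    using assms(4,5) by (intro abs_diam_diff_le_two_dGH) (simp_all add: scaled)
  finally have lower: "ereal \<bar>l - m\<bar> * diam M d \<le> ?dGH" .
  have "?dGH \<le> ereal \<bar>l - m\<bar> * diam M d"
  proof (cases "l = 0 \<or> m = 0")
    case True
    have "?dGH \<le> max (diam (scale_set l M) (scale_dist l d)) (diam (scale_set m M) (scale_dist m d))"
      using assms(4,5) by (intro two_dGH_le_max_diam) (simp_all add: scaled)
    also have "\<dots> = ereal \<bar>l - m\<bar> * diam M d"
      using True assms(4,5) by (auto simp: scaled D)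
    finally show ?thesis .
  next
    case False
    then have "0 < l" "0 < m"
      using assms(4,5) by auto
    then have "Id_on M \<in> corrs k M (scale_dist l d) M (scale_dist m d)"
      by (simp add: Id_on_in_corrs Metric_space_scale_dist assms(1) mtopology_scale_dist)
    then show ?thesis
      unfolding two_dGH_eq_INF scale_set_def using False
      by (auto intro: INF_lower2 dis_Id_on_scale_dist_le[OF assms(1)])
  qed
  with lower show ?thesis
    by (rule antisym[rotated])
qed

text \<open>No boundedness is needed for \<open>l = 0\<close>: in the extended reals \<open>0 * \<infinity> = 0\<close>.\<close>

lemma dGH_scale:
  assumes "Metric_space M d" "M \<noteq> {}" "Metric_space N e" "N \<noteq> {}" "0 \<le> l"
  shows "dGH k (scale_set l M) (scale_dist l d) (scale_set l N) (scale_dist l e)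
    = ereal l * dGH k M d N e"
proof (cases "l = 0")
  case True
  have "2 * dGH k (scale_set l M) (scale_dist l d) (scale_set l N) (scale_dist l e)
      \<le> max (diam (scale_set l M) (scale_dist l d)) (diam (scale_set l N) (scale_dist l e))"
    using assms by (intro two_dGH_le_max_diam Metric_space_scale scale_set_nonempty)
  also have "\<dots> = 0"
    using True assms by (simp add: diam_scale zero_ereal_def[symmetric])
  finally have "2 * dGH k (scale_set l M) (scale_dist l d) (scale_set l N) (scale_dist l e) \<le> 0" .
  then have "dGH k (scale_set l M) (scale_dist l d) (scale_set l N) (scale_dist l e) = 0"
    using dGH_nonneg[OF scale_set_nonempty[OF assms(2)],
        of k l "scale_dist l d" "scale_set l N" "scale_dist l e"]
    by (cases "dGH k (scale_set l M) (scale_dist l d) (scale_set l N) (scale_dist l e)") auto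
  with True show ?thesis
    by (simp add: zero_ereal_def[symmetric])
next
  case False
  then have "0 < l"
    using assms(5) by simp
  have "(INF R\<in>corrs k M d N e. dis (scale_dist l d) (scale_dist l e) R)
      = (INF R\<in>corrs k M d N e. ereal l * dis d e R)"
    using assms(2,5)
    by (intro INF_cong refl dis_scale_dist correspondence_nonempty correspondence_if_in_corrs)
  also have "\<dots> = ereal l * (INF R\<in>corrs k M d N e. dis d e R)"
    by (rule INF_ereal_cmult[OF \<open>0 < l\<close>])
  finally show ?thesis
    unfolding dGH_def corrs_scale[OF assms(1,3) \<open>0 < l\<close>] by (simp add: mult.left_commute)
qed

lemma dGH_tendsto_0_imp_dGH_GH_tendsto_0:
  assumes "\<And>n. Xs n \<noteq> {}" "(\<lambda>n. dGH k (Xs n) (dXs n) M d) \<longlonglongrightarrow> 0"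
  shows "(\<lambda>n. dGH GH (Xs n) (dXs n) M d) \<longlonglongrightarrow> 0"
  by (rule tendsto_sandwich[OF _ _ tendsto_const assms(2)])
    (simp_all add: dGH_nonneg[OF assms(1)] dGH_GH_le)

theorem mainTheorem11:
  fixes k :: gh_kind
    and X :: "'a set" and dX :: "'a \<Rightarrow> 'a \<Rightarrow> real"
    and Y :: "'b set" and dY :: "'b \<Rightarrow> 'b \<Rightarrow> real"
  assumes "Metric_space X dX" and "X \<noteq> {}"
    and "Metric_space Y dY" and "Y \<noteq> {}"
  shows
    "(2 * dGH k Delta1_set Delta1_dist X dX = diam X dX)
   \<and> (2 * dGH k X dX Y dY \<le> max (diam X dX) (diam Y dY))
   \<and> ((diam X dX < \<infinity> \<or> diam Y dY < \<infinity>) \<longrightarrow>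
           \<bar>diam X dX - diam Y dY\<bar> \<le> 2 * dGH k X dX Y dY)
   \<and> (diam X dX < \<infinity> \<longrightarrow> (\<forall>l m. 0 \<le> l \<and> 0 \<le> m \<longrightarrow>
           2 * dGH k (scale_set l X) (scale_dist l dX) (scale_set m X) (scale_dist m dX)
             = ereal \<bar>l - m\<bar> * diam X dX))
   \<and> (\<forall>l. (0 < l \<or> (l = 0 \<and> diam X dX < \<infinity> \<and> diam Y dY < \<infinity>)) \<longrightarrow>
           dGH k (scale_set l X) (scale_dist l dX) (scale_set l Y) (scale_dist l dY)
             = ereal l * dGH k X dX Y dY)
   \<and> ((discrete_mspace X dX \<and> discrete_mspace Y dY) \<longrightarrow>
           dGH k X dX Y dY = dGH GH X dX Y dY)
   \<and> (\<forall>(Xs :: nat \<Rightarrow> 'c set) (dXs :: nat \<Rightarrow> 'c \<Rightarrow> 'c \<Rightarrow> real).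
         (\<forall>n. Metric_space (Xs n) (dXs n) \<and> Xs n \<noteq> {}) \<longrightarrow>
         ((\<lambda>n. dGH k (Xs n) (dXs n) X dX) \<longlonglongrightarrow> 0) \<longrightarrow>
         ((\<lambda>n. dGH GH (Xs n) (dXs n) X dX) \<longlonglongrightarrow> 0))"
proof (intro conjI allI impI)
  show "2 * dGH k Delta1_set Delta1_dist X dX = diam X dX"
    unfolding Delta1_set_def Delta1_dist_def
    by (rule two_dGH_singleton[OF _ assms(1,2)]) (simp add: Metric_space_def)
  show "2 * dGH k X dX Y dY \<le> max (diam X dX) (diam Y dY)"
    using assms(1,3,2,4) by (rule two_dGH_le_max_diam)
  show "\<bar>diam X dX - diam Y dY\<bar> \<le> 2 * dGH k X dX Y dY" if "diam X dX < \<infinity> \<or> diam Y dY < \<infinity>"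
    using assms(1,3,2,4) that by (rule abs_diam_diff_le_two_dGH)
  show "2 * dGH k (scale_set l X) (scale_dist l dX) (scale_set m X) (scale_dist m dX)
      = ereal \<bar>l - m\<bar> * diam X dX" if "diam X dX < \<infinity>" "0 \<le> l \<and> 0 \<le> m" for l m
    using that by (intro two_dGH_scale_scale[OF assms(1,2)]) auto
  show "dGH k (scale_set l X) (scale_dist l dX) (scale_set l Y) (scale_dist l dY) = ereal l * dGH k X dX Y dY"
    if "0 < l \<or> (l = 0 \<and> diam X dX < \<infinity> \<and> diam Y dY < \<infinity>)" for l
    using that by (metis dGH_scale[OF assms] less_imp_le order_refl)
  show "dGH k X dX Y dY = dGH GH X dX Y dY" if "discrete_mspace X dX \<and> discrete_mspace Y dY"
    using that dGH_discrete by blast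
  show "(\<lambda>n. dGH GH (Xs n) (dXs n) X dX) \<longlonglongrightarrow> 0"
    if "\<forall>n. Metric_space (Xs n) (dXs n) \<and> Xs n \<noteq> {}" "(\<lambda>n. dGH k (Xs n) (dXs n) X dX) \<longlonglongrightarrow> 0"
    for Xs :: "nat \<Rightarrow> 'c set" and dXs :: "nat \<Rightarrow> 'c \<Rightarrow> 'c \<Rightarrow> real"
    using that(1) by (intro dGH_tendsto_0_imp_dGH_GH_tendsto_0[OF _ that(2)]) blast
qed

end
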